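(* Let $\alpha,\beta\in\mathbb{C}$ be not both zero, $\ell(x,y)=\alpha x+\beta y$, $H(x,y)=\tfrac12 a_1x^2+a_2xy+\tfrac12 a_3y^2+a_4x+a_5y$, and let $\Phi_f$ be the Kahan map (step $1$) of the vector field $f=\ell\,(\partial H/\partial y,\,-\partial H/\partial x)^T$. Let $\gamma_1=a_2^2-a_1a_3$, $c=\gamma_1^{-1/2}$, $\gamma_2=a_3a_4^2+a_1a_5^2-2a_2a_4a_5$, $C=H-\tfrac12\gamma_2\ell^2$, $D=1-\gamma_1\ell^2$, and consider the pencil of conics $C(x,y)-\lambda D(x,y)=0$, with $C(x,y)=0$ nonsingular. Then, generically, the map $\Phi_f$, considered as a birational map $\mathbb{C}P^2\dashrightarrow\mathbb{C}P^2$, has three singular points $B_1,B_3,B_0$, lying on the lines $\ell(x,y)=-c$, $\ell(x,y)=c$ and $\ell(x,y)=0$ respectively; and $\Phi_f^{-1}$ has three singular points $B_2,B_4,B_5$, lying on the lines $\ell(x,y)=-c$, $\ell(x,y)=c$ and $\ell(x,y)=0$ respectively. The points $B_1,B_2,B_3,B_4$ are the base points of the pencil, and $$B_0=\tfrac12(B_2+B_4),\qquad B_5=\tfrac12(B_1+B_3).$$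
   Context: Kahan discretization: for a quadratic vector field $f(x)=Q(x)+Bx+c$ on $\mathbb{C}^n$, the Kahan map $\widetilde x=\Phi_f(x)$ (step $1$) is defined by $\frac{\widetilde x-x}{2}=Q(x,\widetilde x)+\frac12B(x+\widetilde x)+c$ with $Q(x,\widetilde x)=\frac12(Q(x+\widetilde x)-Q(x)-Q(\widetilde x))$; equivalently $\Phi_f(x)=x+2(I-f'(x))^{-1}f(x)$. It is birational with $\Phi_f^{-1}=\Phi_{-f}$. In the planar case $\Phi_f=(R/T,S/T)$ with polynomials $R,S,T$ of degree 2; singular points of the birational map are its points of indeterminacy, i.e. the common zeros of the components of its homogenized representation (in the affine part, the common zeros of $R,S,T$). Base points of a pencil of conics are the points common to all its conics. *)

theory Defs
  imports Complex_Main
begin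

type_synonym lin2 = "complex \<times> complex \<times> complex"
type_synonym quad2 = "complex \<times> complex \<times> complex \<times> complex \<times> complex \<times> complex"

fun lin_eval :: "lin2 \<Rightarrow> complex \<Rightarrow> complex \<Rightarrow> complex" where
  "lin_eval (p, q, r) x y = p * x + q * y + r"

fun quad_eval :: "quad2 \<Rightarrow> complex \<Rightarrow> complex \<Rightarrow> complex" where
  "quad_eval (A, B, C, D, E, F) x y = A * x^2 + B * x * y + C * y^2 + D * x + E * y + F"

fun quad_hom :: "quad2 \<Rightarrow> complex \<Rightarrow> complex \<Rightarrow> complex \<Rightarrow> complex" where
  "quad_hom (A, B, C, D, E, F) x y z =
     A * x^2 + B * x * y + C * y^2 + D * x * z + E * y * z + F * z^2"

fun lin_mul :: "lin2 \<Rightarrow> lin2 \<Rightarrow> quad2" where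
  "lin_mul (p, q, r) (u, v, w) = (p * u, p * v + q * u, q * v, p * w + r * u, q * w + r * v, r * w)"

fun quad_add :: "quad2 \<Rightarrow> quad2 \<Rightarrow> quad2" where
  "quad_add (A, B, C, D, E, F) (A', B', C', D', E', F') =
     (A + A', B + B', C + C', D + D', E + E', F + F')"

fun quad_scale :: "complex \<Rightarrow> quad2 \<Rightarrow> quad2" where
  "quad_scale k (A, B, C, D, E, F) = (k * A, k * B, k * C, k * D, k * E, k * F)"

definition quad_const :: "complex \<Rightarrow> quad2" where
  "quad_const k = (0, 0, 0, 0, 0, k)"

fun quad_dx :: "quad2 \<Rightarrow> lin2" where
  "quad_dx (A, B, C, D, E, F) = (2 * A, B, D)"

fun quad_dy :: "quad2 \<Rightarrow> lin2" where
  "quad_dy (A, B, C, D, E, F) = (B, 2 * C, E)"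

text \<open>A conic \<open>Q(x,y) = 0\<close> is nonsingular if its projective closure has no singular point,
  i.e. no point of \<open>\<complex>P^2\<close> at which all partial derivatives of the homogenized equation
  vanish.\<close>
fun conic_nonsingular :: "quad2 \<Rightarrow> bool" where
  "conic_nonsingular (A, B, C, D, E, F) \<longleftrightarrow>
     \<not> (\<exists>x y z. (x, y, z) \<noteq> (0, 0, 0) \<and>
            2 * A * x + B * y + D * z = 0 \<and>
            B * x + 2 * C * y + E * z = 0 \<and>
            D * x + E * y + 2 * F * z = 0)"

text \<open>A quadratic vector field \<open>f = (f1, f2)\<close> on \<open>\<complex>^2\<close>, each component of degree \<le> 2.
  Writing \<open>f(x) = Q(x) + Bx + c\<close>, the Kahan equation
  \<open>(x' - x)/2 = Q(x,x') + B(x+x')/2 + c\<close> is equivalent to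
  \<open>(I - f'(x)) x' = (I + B) x + 2 c\<close>, so \<open>\<Phi>_f = (R/T, S/T)\<close> with
  \<open>T = det (I - f'(x))\<close>, \<open>(R, S) = adj (I - f'(x)) ((I + B) x + 2 c)\<close>
  (equivalently \<open>\<Phi>_f(x) = x + 2 (I - f'(x))^{-1} f(x)\<close>).
  Below are the homogenized components \<open>(R^h, S^h, T^h)\<close> (homogeneous of degree 2 in
  \<open>(x, y, z)\<close>; setting \<open>z = 1\<close> recovers \<open>R, S, T\<close>).\<close>

type_synonym qvf2 = "quad2 \<times> quad2"

fun kahan_hom :: "qvf2 \<Rightarrow> complex \<Rightarrow> complex \<Rightarrow> complex \<Rightarrow> complex \<times> complex \<times> complex" where
  "kahan_hom ((A1, B1, C1, D1, E1, F1), (A2, B2, C2, D2, E2, F2)) x y z =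
    (let m11 = z - (2 * A1 * x + B1 * y + D1 * z);
         m12 = - (B1 * x + 2 * C1 * y + E1 * z);
         m21 = - (2 * A2 * x + B2 * y + D2 * z);
         m22 = z - (B2 * x + 2 * C2 * y + E2 * z);
         v1 = x + D1 * x + E1 * y + 2 * F1 * z;
         v2 = y + D2 * x + E2 * y + 2 * F2 * z
     in (m22 * v1 - m12 * v2, m11 * v2 - m21 * v1, m11 * m22 - m12 * m21))"

definition kahan_map :: "qvf2 \<Rightarrow> complex \<times> complex \<Rightarrow> complex \<times> complex" where
  "kahan_map f p = (case kahan_hom f (fst p) (snd p) 1 of (R, S, T) \<Rightarrow> (R / T, S / T))"

fun qvf_neg :: "qvf2 \<Rightarrow> qvf2" where
  "qvf_neg (f1, f2) = (quad_scale (-1) f1, quad_scale (-1) f2)"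

text \<open>Points of \<open>\<complex>P^2\<close> are represented by the
  nonzero vectors of \<open>\<complex>^3\<close> (the set below is a union of punctured lines through 0).\<close>
definition kahan_sing :: "qvf2 \<Rightarrow> (complex \<times> complex \<times> complex) set" where
  "kahan_sing f = {(x, y, z). (x, y, z) \<noteq> (0, 0, 0) \<and> kahan_hom f x y z = (0, 0, 0)}"

text \<open>Singular points of \<open>\<Phi>_f^{-1} = \<Phi>_{-f}\<close>.\<close>
definition kahan_inv_sing :: "qvf2 \<Rightarrow> (complex \<times> complex \<times> complex) set" where
  "kahan_inv_sing f = kahan_sing (qvf_neg f)"

definition proj_pt :: "complex \<times> complex \<Rightarrow> (complex \<times> complex \<times> complex) set" where
  "proj_pt p = {(t * fst p, t * snd p, t) | t. t \<noteq> 0}"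

definition pencil_base :: "quad2 \<Rightarrow> quad2 \<Rightarrow> (complex \<times> complex \<times> complex) set" where
  "pencil_base C D = {(x, y, z). (x, y, z) \<noteq> (0, 0, 0) \<and>
      (\<forall>lam. quad_hom C x y z - lam * quad_hom D x y z = 0)}"

inductive polyfun :: "nat \<Rightarrow> ((nat \<Rightarrow> complex) \<Rightarrow> complex) \<Rightarrow> bool" for n where
  pf_const: "polyfun n (\<lambda>v. k)"
| pf_var: "i < n \<Longrightarrow> polyfun n (\<lambda>v. v i)"
| pf_add: "polyfun n p \<Longrightarrow> polyfun n q \<Longrightarrow> polyfun n (\<lambda>v. p v + q v)"
| pf_mult: "polyfun n p \<Longrightarrow> polyfun n q \<Longrightarrow> polyfun n (\<lambda>v. p v * q v)"

definition holds_generically :: "nat \<Rightarrow> ((nat \<Rightarrow> complex) \<Rightarrow> bool) \<Rightarrow> bool" where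
  "holds_generically n P \<longleftrightarrow>
     (\<exists>g. polyfun n g \<and> (\<exists>v. g v \<noteq> 0) \<and> (\<forall>v. g v \<noteq> 0 \<longrightarrow> P v))"

definition ell :: "complex \<Rightarrow> complex \<Rightarrow> lin2" where
  "ell \<alpha> \<beta> = (\<alpha>, \<beta>, 0)"

definition Hfun :: "complex \<Rightarrow> complex \<Rightarrow> complex \<Rightarrow> complex \<Rightarrow> complex \<Rightarrow> quad2" where
  "Hfun a1 a2 a3 a4 a5 = (a1 / 2, a2, a3 / 2, a4, a5, 0)"

definition fvf :: "complex \<Rightarrow> complex \<Rightarrow> complex \<Rightarrow> complex \<Rightarrow> complex \<Rightarrow> complex \<Rightarrow> complex \<Rightarrow> qvf2" where
  "fvf \<alpha> \<beta> a1 a2 a3 a4 a5 =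
     (lin_mul (ell \<alpha> \<beta>) (quad_dy (Hfun a1 a2 a3 a4 a5)),
      quad_scale (-1) (lin_mul (ell \<alpha> \<beta>) (quad_dx (Hfun a1 a2 a3 a4 a5))))"

definition gamma1 :: "complex \<Rightarrow> complex \<Rightarrow> complex \<Rightarrow> complex" where
  "gamma1 a1 a2 a3 = a2^2 - a1 * a3"

definition gamma2 :: "complex \<Rightarrow> complex \<Rightarrow> complex \<Rightarrow> complex \<Rightarrow> complex \<Rightarrow> complex" where
  "gamma2 a1 a2 a3 a4 a5 = a3 * a4^2 + a1 * a5^2 - 2 * a2 * a4 * a5"

definition Cconic :: "complex \<Rightarrow> complex \<Rightarrow> complex \<Rightarrow> complex \<Rightarrow> complex \<Rightarrow> complex \<Rightarrow> complex \<Rightarrow> quad2" where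
  "Cconic \<alpha> \<beta> a1 a2 a3 a4 a5 =
     quad_add (Hfun a1 a2 a3 a4 a5)
              (quad_scale (- gamma2 a1 a2 a3 a4 a5 / 2) (lin_mul (ell \<alpha> \<beta>) (ell \<alpha> \<beta>)))"

definition Dconic :: "complex \<Rightarrow> complex \<Rightarrow> complex \<Rightarrow> complex \<Rightarrow> complex \<Rightarrow> quad2" where
  "Dconic \<alpha> \<beta> a1 a2 a3 =
     quad_add (quad_const 1) (quad_scale (- gamma1 a1 a2 a3) (lin_mul (ell \<alpha> \<beta>) (ell \<alpha> \<beta>)))"

definition midpt :: "complex \<times> complex \<Rightarrow> complex \<times> complex \<Rightarrow> complex \<times> complex" where
  "midpt p q = ((fst p + fst q) / 2, (snd p + snd q) / 2)"

end

theory Submission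
  imports Defs
begin

(* Write \<ell> = \<alpha> x + \<beta> y, b = {\<ell>, H} - 1 = \<alpha> H_y - \<beta> H_x - 1, and let c^2 gamma1 = 1.
  In homogeneous coordinates the components (R, S, T) of the Kahan map satisfy
  T = z^2 - gamma1 \<ell>^2 - (\<alpha> U1 + \<beta> U2) and z (R, S) = T (x, y) + 2 \<ell> (U1, U2).
  On \<ell> = 0 they reduce to -b (x, y, z), giving the singular point B0 = {\<ell> = 0} \<inter> {b = 0};
  off \<ell> = 0 a singular point needs U = 0, hence z^2 = gamma1 \<ell>^2, i.e. \<ell> = s z with s = \<plusminus>c,
  and there U1 = 0 is the line E_s = (1 + s a2) H_y - s a3 H_x = 0.  The lines E_c, E_-c are
  the asymptotes of the level conics of H and form the degenerate member
  2 a3 gamma1 C - a3 gamma2 D = gamma1 E_c E_-c of the pencil, whose other degenerate member is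
  D = - gamma1 (\<ell> - c z) (\<ell> + c z).  So the base points are the four points {\<ell> = s} \<inter> {E_s' = 0};
  \<Phi>_f is singular at the two with s = s', and \<Phi>_f^-1 = \<Phi>_-f, obtained by flipping the sign
  of (\<alpha>, \<beta>), at the other two.  Along E_s the function gamma1 (s b + \<ell> + s) is constant,
  which makes b and \<ell> vanish at the midpoint of B2 and B4, so that midpoint is B0. *)

fun lin_hom :: "lin2 \<Rightarrow> complex \<Rightarrow> complex \<Rightarrow> complex \<Rightarrow> complex" where
  "lin_hom (p, q, r) x y z = p * x + q * y + r * z"

fun line_det :: "lin2 \<Rightarrow> lin2 \<Rightarrow> complex" where
  "line_det (p, q, _) (u, v, _) = p * v - q * u"

fun line_meet :: "lin2 \<Rightarrow> lin2 \<Rightarrow> complex \<times> complex" where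
  "line_meet (p, q, r) (u, v, w) =
     ((q * w - r * v) / (p * v - q * u), (r * u - p * w) / (p * v - q * u))"

lemma lin_hom_one [simp]: "lin_hom L x y 1 = lin_eval L x y"
  by (cases L) simp

lemma lin_hom_scale: "lin_hom L (t * x) (t * y) (t * z) = t * lin_hom L x y z"
  by (cases L) (simp add: algebra_simps)

lemma lin_eval_line_meet:
  assumes "line_det L M \<noteq> 0"
  shows "lin_eval L (fst (line_meet L M)) (snd (line_meet L M)) = 0"
    and "lin_eval M (fst (line_meet L M)) (snd (line_meet L M)) = 0"
proof -
  obtain p q r u v w where L: "L = (p, q, r)" and M: "M = (u, v, w)"
    by (cases L, cases M) auto
  have d: "p * v - q * u \<noteq> 0" using assms unfolding L M by simp
  show "lin_eval L (fst (line_meet L M)) (snd (line_meet L M)) = 0"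
    using d unfolding L M by (simp add: divide_simps) algebra
  show "lin_eval M (fst (line_meet L M)) (snd (line_meet L M)) = 0"
    using d unfolding L M by (simp add: divide_simps) algebra
qed

lemma line_meet_unique_hom:
  assumes "line_det L M \<noteq> 0" and "lin_hom L x y z = 0" and "lin_hom M x y z = 0"
  shows "x = z * fst (line_meet L M) \<and> y = z * snd (line_meet L M)"
proof -
  obtain p q r u v w where L: "L = (p, q, r)" and M: "M = (u, v, w)"
    by (cases L, cases M) auto
  have "(p * v - q * u) * x = (q * w - r * v) * z" "(p * v - q * u) * y = (r * u - p * w) * z"
    using assms(2,3) unfolding L M by (simp; algebra)+
  with assms(1) show ?thesis unfolding L M by (simp add: field_simps)
qed

lemma line_meet_unique:
  assumes "line_det L M \<noteq> 0"
    and "lin_eval L (fst P) (snd P) = 0" and "lin_eval M (fst P) (snd P) = 0"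
  shows "P = line_meet L M"
  using line_meet_unique_hom[of L M "fst P" "snd P" 1] assms by (simp add: prod_eq_iff)

lemma proj_pt_line_meet:
  assumes "line_det L M \<noteq> 0"
  shows "proj_pt (line_meet L M) =
    {(x, y, z). (x, y, z) \<noteq> (0, 0, 0) \<and> lin_hom L x y z = 0 \<and> lin_hom M x y z = 0}"
    (is "_ = ?S")
proof (intro set_eqI iffI)
  fix P assume "P \<in> proj_pt (line_meet L M)"
  then obtain t where t: "t \<noteq> 0" and P: "P = (t * fst (line_meet L M), t * snd (line_meet L M), t)"
    unfolding proj_pt_def by auto
  have "lin_hom N (t * fst (line_meet L M)) (t * snd (line_meet L M)) (t * 1)
      = t * lin_eval N (fst (line_meet L M)) (snd (line_meet L M))" for N
    by (simp only: lin_hom_scale lin_hom_one)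
  then show "P \<in> ?S"
    using t lin_eval_line_meet[OF assms] unfolding P by simp
next
  fix P assume "P \<in> ?S"
  then obtain x y z where P: "P = (x, y, z)" "(x, y, z) \<noteq> (0, 0, 0)"
    and "lin_hom L x y z = 0" "lin_hom M x y z = 0" by auto
  then have "x = z * fst (line_meet L M) \<and> y = z * snd (line_meet L M)"
    using line_meet_unique_hom[OF assms] by blast
  with P show "P \<in> proj_pt (line_meet L M)"
    unfolding proj_pt_def by (cases "z = 0") auto
qed

lemma line_meet_uminus_left: "line_meet (- p, - q, - r) M = line_meet (p, q, r) M"
proof -
  have flip: "(a - b) / (c - d) = (b - a) / (d - c)" for a b c d :: complex
    by (metis minus_diff_eq minus_divide_divide)
  show ?thesis by (cases M) (simp, metis flip)
qed

lemma lin_eval_midpt: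
  "lin_eval L (fst (midpt P Q)) (snd (midpt P Q))
     = (lin_eval L (fst P) (snd P) + lin_eval L (fst Q) (snd Q)) / 2"
  by (cases L) (simp add: midpt_def field_simps)

lemma midpt_commute: "midpt P Q = midpt Q P"
  by (simp add: midpt_def add.commute)

lemma pencil_base_eq:
  "pencil_base C D =
    {(x, y, z). (x, y, z) \<noteq> (0, 0, 0) \<and> quad_hom C x y z = 0 \<and> quad_hom D x y z = 0}"
proof -
  have "(\<forall>lam. a - lam * b = 0) \<longleftrightarrow> a = 0 \<and> b = 0" for a b :: complex
  proof
    assume "\<forall>lam. a - lam * b = 0"
    from this[rule_format, of 0] this[rule_format, of 1] show "a = 0 \<and> b = 0" by simp
  qed simp
  then show ?thesis unfolding pencil_base_def by blast
qed

lemma fvf_Hamiltonian: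
  "fvf \<alpha> \<beta> a1 a2 a3 a4 a5 =
    (lin_mul (ell \<alpha> \<beta>) (a2, a3, a5), quad_scale (- 1) (lin_mul (ell \<alpha> \<beta>) (a1, a2, a4)))"
  by (simp add: fvf_def Hfun_def)

locale kahan_data =
  fixes \<alpha> \<beta> a1 a2 a3 a4 a5 :: complex
begin

definition Hx :: "complex \<Rightarrow> complex \<Rightarrow> complex \<Rightarrow> complex" where
  "Hx x y z = a1 * x + a2 * y + a4 * z"

definition Hy :: "complex \<Rightarrow> complex \<Rightarrow> complex \<Rightarrow> complex" where
  "Hy x y z = a2 * x + a3 * y + a5 * z"

text \<open>\<open>(U1, U2) = adj (z I - f') (H_y, - H_x)\<close>, so that \<open>\<Phi>_f - id = 2 \<ell> U / T\<close>.\<close>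

definition U1 :: "complex \<Rightarrow> complex \<Rightarrow> complex \<Rightarrow> complex" where
  "U1 x y z = z * Hy x y z + (\<alpha> * x + \<beta> * y) * (a2 * Hy x y z - a3 * Hx x y z)"

definition U2 :: "complex \<Rightarrow> complex \<Rightarrow> complex \<Rightarrow> complex" where
  "U2 x y z = - z * Hx x y z + (\<alpha> * x + \<beta> * y) * (a2 * Hx x y z - a1 * Hy x y z)"

definition ell_line :: "complex \<Rightarrow> lin2" where
  "ell_line s = (\<alpha>, \<beta>, - s)"

definition bracket_line :: lin2 where
  "bracket_line = (\<alpha> * a2 - \<beta> * a1, \<alpha> * a3 - \<beta> * a2, \<alpha> * a5 - \<beta> * a4 - 1)"

definition asymptote :: "complex \<Rightarrow> lin2" where
  "asymptote s = (a2 + s * gamma1 a1 a2 a3, a3, (1 + s * a2) * a5 - s * a3 * a4)"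

lemma kahan_hom_fvf:
  assumes "kahan_hom (fvf \<alpha> \<beta> a1 a2 a3 a4 a5) x y z = (R, S, T)"
  shows "T = z^2 - gamma1 a1 a2 a3 * (\<alpha> * x + \<beta> * y)^2 - (\<alpha> * U1 x y z + \<beta> * U2 x y z)"
    and "z * R = T * x + 2 * (\<alpha> * x + \<beta> * y) * U1 x y z"
    and "z * S = T * y + 2 * (\<alpha> * x + \<beta> * y) * U2 x y z"
proof -
  have RST: "R = fst (kahan_hom (fvf \<alpha> \<beta> a1 a2 a3 a4 a5) x y z)"
    "S = fst (snd (kahan_hom (fvf \<alpha> \<beta> a1 a2 a3 a4 a5) x y z))"
    "T = snd (snd (kahan_hom (fvf \<alpha> \<beta> a1 a2 a3 a4 a5) x y z))"
    using assms by simp_all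
  note defs = RST fvf_Hamiltonian ell_def gamma1_def U1_def U2_def Hx_def Hy_def
    kahan_hom.simps lin_mul.simps quad_scale.simps Let_def fst_conv snd_conv
  show "T = z^2 - gamma1 a1 a2 a3 * (\<alpha> * x + \<beta> * y)^2 - (\<alpha> * U1 x y z + \<beta> * U2 x y z)"
    by (simp only: defs) algebra
  show "z * R = T * x + 2 * (\<alpha> * x + \<beta> * y) * U1 x y z"
    by (simp only: defs) algebra
  show "z * S = T * y + 2 * (\<alpha> * x + \<beta> * y) * U2 x y z"
    by (simp only: defs) algebra
qed

lemma kahan_hom_fvf_ell_zero:
  assumes "\<alpha> * x + \<beta> * y = 0"
  shows "kahan_hom (fvf \<alpha> \<beta> a1 a2 a3 a4 a5) x y z =
    (- lin_hom bracket_line x y z * x, - lin_hom bracket_line x y z * y,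
     - z * lin_hom bracket_line x y z)"
  using assms unfolding fvf_Hamiltonian ell_def bracket_line_def
  by (simp only: kahan_hom.simps lin_mul.simps quad_scale.simps lin_hom.simps Let_def prod.inject;
      intro conjI; algebra)

lemma U_ell_line:
  assumes "\<alpha> * x + \<beta> * y = s * z"
  shows "U1 x y z = z * lin_hom (asymptote s) x y z"
    and "s^2 * gamma1 a1 a2 a3 = 1 \<Longrightarrow> s * a3 * U2 x y z = (1 - s * a2) * z * lin_hom (asymptote s) x y z"
  using assms unfolding U1_def U2_def Hx_def Hy_def asymptote_def gamma1_def lin_hom.simps
  by algebra+

lemma quad_hom_Dconic:
  "quad_hom (Dconic \<alpha> \<beta> a1 a2 a3) x y z = z^2 - gamma1 a1 a2 a3 * (\<alpha> * x + \<beta> * y)^2"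
  unfolding Dconic_def quad_const_def ell_def by (simp; algebra)

lemma quad_hom_Cconic_asymptotes:
  assumes "c^2 * gamma1 a1 a2 a3 = 1"
  shows "2 * a3 * gamma1 a1 a2 a3 * quad_hom (Cconic \<alpha> \<beta> a1 a2 a3 a4 a5) x y z =
    gamma1 a1 a2 a3 * lin_hom (asymptote c) x y z * lin_hom (asymptote (- c)) x y z
    + a3 * gamma2 a1 a2 a3 a4 a5 * quad_hom (Dconic \<alpha> \<beta> a1 a2 a3) x y z"
  using assms unfolding Cconic_def Dconic_def quad_const_def ell_def Hfun_def asymptote_def
    gamma1_def gamma2_def
  by (simp add: field_simps; algebra)

text \<open>\<open>\<alpha> (a3 a4 - a2 a5) + \<beta> (a1 a5 - a2 a4)\<close> is \<open>gamma1\<close> times the value of \<open>\<ell>\<close>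
  at the centre of the conics \<open>H = const\<close>.\<close>

lemma asymptote_bracket:
  assumes "s^2 * gamma1 a1 a2 a3 = 1"
  shows "a3 * (gamma1 a1 a2 a3 * (s * lin_eval bracket_line x y + lin_eval (ell_line (- s)) x y)
      - (\<alpha> * (a3 * a4 - a2 * a5) + \<beta> * (a1 * a5 - a2 * a4)))
    = (s * a3 * \<alpha> + \<beta> * (1 - s * a2)) * gamma1 a1 a2 a3 * lin_eval (asymptote s) x y"
  using assms unfolding bracket_line_def ell_line_def asymptote_def gamma1_def lin_eval.simps
  by algebra

definition bracket_pt :: "complex \<times> complex" where
  "bracket_pt = line_meet (ell_line 0) bracket_line"

definition base_pt :: "complex \<Rightarrow> complex \<Rightarrow> complex \<times> complex" where
  "base_pt s s' = line_meet (ell_line s) (asymptote s')"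

end

lemma qvf_neg_fvf: "qvf_neg (fvf \<alpha> \<beta> a1 a2 a3 a4 a5) = fvf (- \<alpha>) (- \<beta>) a1 a2 a3 a4 a5"
  unfolding fvf_def ell_def Hfun_def by simp

locale kahan_pencil = kahan_data +
  fixes c :: complex
  assumes c_sq: "c^2 * gamma1 a1 a2 a3 = 1"
    and a3_nz: "a3 \<noteq> 0"
    and ell_bracket_transversal: "\<alpha>^2 * a3 - 2 * \<alpha> * \<beta> * a2 + \<beta>^2 * a1 \<noteq> 0"
    and ell_asymptote_transversal: "(\<alpha> * a3 - \<beta> * a2)^2 \<noteq> \<beta>^2 * gamma1 a1 a2 a3"
    \<comment> \<open>the product of the determinants of \<open>\<ell>\<close> against the two asymptotes\<close>
begin

lemma c_nz: "c \<noteq> 0" and gamma1_nz: "gamma1 a1 a2 a3 \<noteq> 0"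
  using c_sq by auto

lemma line_det_ell_bracket: "line_det (ell_line s) bracket_line \<noteq> 0"
  using ell_bracket_transversal unfolding ell_line_def bracket_line_def
  by (simp add: algebra_simps power2_eq_square)

lemma line_det_ell_asymptote:
  shows "line_det (ell_line s) (asymptote c) \<noteq> 0"
    and "line_det (ell_line s) (asymptote (- c)) \<noteq> 0"
proof -
  have "line_det (ell_line s) (asymptote c) * line_det (ell_line s) (asymptote (- c))
      = (\<alpha> * a3 - \<beta> * a2)^2 - \<beta>^2 * gamma1 a1 a2 a3 * (c^2 * gamma1 a1 a2 a3)"
    unfolding ell_line_def asymptote_def by simp algebra
  then have "line_det (ell_line s) (asymptote c) * line_det (ell_line s) (asymptote (- c)) \<noteq> 0"
    using c_sq ell_asymptote_transversal by simp
  then show "line_det (ell_line s) (asymptote c) \<noteq> 0"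
    and "line_det (ell_line s) (asymptote (- c)) \<noteq> 0" by auto
qed

lemma kahan_hom_fvf_eq_0_imp:
  assumes "(x, y, z) \<noteq> (0, 0, 0)" and "kahan_hom (fvf \<alpha> \<beta> a1 a2 a3 a4 a5) x y z = (0, 0, 0)"
  shows "(lin_hom (ell_line 0) x y z = 0 \<and> lin_hom bracket_line x y z = 0) \<or>
    (\<exists>s \<in> {c, - c}. lin_hom (ell_line s) x y z = 0 \<and> lin_hom (asymptote s) x y z = 0)"
proof (cases "\<alpha> * x + \<beta> * y = 0")
  case True
  then have "lin_hom bracket_line x y z = 0"
    using assms kahan_hom_fvf_ell_zero[of x y z] by auto
  with True show ?thesis unfolding ell_line_def by simp
next
  case False
  define l where "l = \<alpha> * x + \<beta> * y"
  note kh = kahan_hom_fvf[OF assms(2), folded l_def]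
  have "l \<noteq> 0" using False l_def by simp
  with kh(2,3) have "U1 x y z = 0" "U2 x y z = 0" by simp_all
  with kh(1) l_def have z_sq: "z^2 = gamma1 a1 a2 a3 * (\<alpha> * x + \<beta> * y)^2" by simp
  then have "(\<alpha> * x + \<beta> * y - c * z) * (\<alpha> * x + \<beta> * y + c * z) = 0"
    using c_sq by algebra
  then have "\<alpha> * x + \<beta> * y = c * z \<or> \<alpha> * x + \<beta> * y = (- c) * z"
    by (simp add: add_eq_0_iff2)
  then obtain s where s: "s \<in> {c, - c}" and ell_s: "\<alpha> * x + \<beta> * y = s * z"
    by blast
  have "z \<noteq> 0" using False ell_s by auto
  then have "lin_hom (asymptote s) x y z = 0"
    using U_ell_line(1)[OF ell_s] \<open>U1 x y z = 0\<close> by simp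
  with s ell_s show ?thesis unfolding ell_line_def by auto
qed

lemma kahan_hom_fvf_base:
  assumes s: "s \<in> {c, - c}"
    and ell_s: "lin_hom (ell_line s) x y z = 0" and asym_s: "lin_hom (asymptote s) x y z = 0"
  shows "kahan_hom (fvf \<alpha> \<beta> a1 a2 a3 a4 a5) x y z = (0, 0, 0)"
proof (cases "z = 0")
  case True
  have "line_det (ell_line s) (asymptote s) \<noteq> 0" using s line_det_ell_asymptote by auto
  then have "x = 0 \<and> y = 0" using line_meet_unique_hom ell_s asym_s True by fastforce
  with True show ?thesis using kahan_hom_fvf_ell_zero[of 0 0 0] by simp
next
  case False
  have ell_s': "\<alpha> * x + \<beta> * y = s * z" using ell_s unfolding ell_line_def by simp
  have s_sq: "s^2 * gamma1 a1 a2 a3 = 1" using s c_sq by auto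
  have U1: "U1 x y z = 0" using U_ell_line(1)[OF ell_s'] asym_s by simp
  have "s * a3 * U2 x y z = 0" using U_ell_line(2)[OF ell_s' s_sq] asym_s by simp
  then have U2: "U2 x y z = 0" using s_sq a3_nz by auto
  obtain R S T where RST: "kahan_hom (fvf \<alpha> \<beta> a1 a2 a3 a4 a5) x y z = (R, S, T)"
    by (metis prod_cases3)
  have "T = z^2 * (1 - s^2 * gamma1 a1 a2 a3)"
    using kahan_hom_fvf(1)[OF RST] U1 U2 ell_s' by (simp add: algebra_simps power2_eq_square)
  then have "T = 0" using s_sq by simp
  then have "R = 0" "S = 0" using kahan_hom_fvf(2,3)[OF RST] U1 U2 False by simp_all
  with \<open>T = 0\<close> RST show ?thesis by simp
qed

lemma kahan_hom_fvf_eq_0_iff: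
  assumes "(x, y, z) \<noteq> (0, 0, 0)"
  shows "kahan_hom (fvf \<alpha> \<beta> a1 a2 a3 a4 a5) x y z = (0, 0, 0) \<longleftrightarrow>
    (lin_hom (ell_line 0) x y z = 0 \<and> lin_hom bracket_line x y z = 0) \<or>
    (\<exists>s \<in> {c, - c}. lin_hom (ell_line s) x y z = 0 \<and> lin_hom (asymptote s) x y z = 0)"
    (is "?zero \<longleftrightarrow> ?bracket \<or> ?asymptote")
proof
  assume "?bracket \<or> ?asymptote"
  then show ?zero
  proof
    assume ?bracket
    then show ?zero using kahan_hom_fvf_ell_zero unfolding ell_line_def by simp
  qed (use kahan_hom_fvf_base in blast)
qed (rule kahan_hom_fvf_eq_0_imp[OF assms])

lemma kahan_sing_fvf:
  "kahan_sing (fvf \<alpha> \<beta> a1 a2 a3 a4 a5)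
     = proj_pt (base_pt (- c) (- c)) \<union> proj_pt (base_pt c c) \<union> proj_pt bracket_pt"
  unfolding kahan_sing_def bracket_pt_def base_pt_def proj_pt_line_meet[OF line_det_ell_bracket]
    proj_pt_line_meet[OF line_det_ell_asymptote(1)] proj_pt_line_meet[OF line_det_ell_asymptote(2)]
  using kahan_hom_fvf_eq_0_iff by auto

lemma quad_hom_Dconic_ell_lines:
  "quad_hom (Dconic \<alpha> \<beta> a1 a2 a3) x y z
     = - gamma1 a1 a2 a3 * lin_hom (ell_line c) x y z * lin_hom (ell_line (- c)) x y z"
  using c_sq unfolding quad_hom_Dconic ell_line_def lin_hom.simps by algebra

lemma Cconic_Dconic_eq_0_iff:
  "quad_hom (Cconic \<alpha> \<beta> a1 a2 a3 a4 a5) x y z = 0 \<and> quad_hom (Dconic \<alpha> \<beta> a1 a2 a3) x y z = 0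
   \<longleftrightarrow> (lin_hom (ell_line c) x y z = 0 \<or> lin_hom (ell_line (- c)) x y z = 0) \<and>
       (lin_hom (asymptote c) x y z = 0 \<or> lin_hom (asymptote (- c)) x y z = 0)"
  using quad_hom_Cconic_asymptotes[OF c_sq, of x y z] quad_hom_Dconic_ell_lines[of x y z]
    a3_nz gamma1_nz
  by auto

lemma pencil_base_CD:
  "pencil_base (Cconic \<alpha> \<beta> a1 a2 a3 a4 a5) (Dconic \<alpha> \<beta> a1 a2 a3)
     = proj_pt (base_pt (- c) (- c)) \<union> proj_pt (base_pt (- c) c)
       \<union> proj_pt (base_pt c c) \<union> proj_pt (base_pt c (- c))"
  unfolding pencil_base_eq base_pt_def
    proj_pt_line_meet[OF line_det_ell_asymptote(1)] proj_pt_line_meet[OF line_det_ell_asymptote(2)]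
  using Cconic_Dconic_eq_0_iff by auto

lemma bracket_pt_midpt: "bracket_pt = midpt (base_pt (- c) c) (base_pt c (- c))"
proof -
  define P Q where "P = base_pt (- c) c" and "Q = base_pt c (- c)"
  define b where "b = (\<lambda>p. lin_eval bracket_line (fst p) (snd p))"
  define m where "m = \<alpha> * (a3 * a4 - a2 * a5) + \<beta> * (a1 * a5 - a2 * a4)"
  have P: "lin_eval (ell_line (- c)) (fst P) (snd P) = 0" "lin_eval (asymptote c) (fst P) (snd P) = 0"
    unfolding P_def base_pt_def using lin_eval_line_meet line_det_ell_asymptote by blast+
  have Q: "lin_eval (ell_line c) (fst Q) (snd Q) = 0" "lin_eval (asymptote (- c)) (fst Q) (snd Q) = 0"
    unfolding Q_def base_pt_def using lin_eval_line_meet line_det_ell_asymptote by blast+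
  have bP: "gamma1 a1 a2 a3 * (c * b P) = m"
    using asymptote_bracket[OF c_sq, of "fst P" "snd P"] P a3_nz unfolding b_def m_def by simp
  have bQ: "gamma1 a1 a2 a3 * (- c * b Q) = m"
    using asymptote_bracket[of "- c" "fst Q" "snd Q"] c_sq Q a3_nz unfolding b_def m_def by simp
  have "gamma1 a1 a2 a3 * c * (b P + b Q)
      = gamma1 a1 a2 a3 * (c * b P) - gamma1 a1 a2 a3 * (- c * b Q)"
    by (simp add: algebra_simps)
  then have "gamma1 a1 a2 a3 * c * (b P + b Q) = 0" unfolding bP bQ by simp
  then have b_sum: "b P + b Q = 0" using gamma1_nz c_nz by simp
  have ell_sum: "lin_eval (ell_line 0) (fst P) (snd P) + lin_eval (ell_line 0) (fst Q) (snd Q) = 0"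
    using P(1) Q(1) unfolding ell_line_def by simp
  show ?thesis
    using line_meet_unique[OF line_det_ell_bracket, where P = "midpt P Q"] b_sum ell_sum
    unfolding lin_eval_midpt bracket_pt_def P_def Q_def b_def by simp
qed

lemma lin_eval_ell_base_pt:
  shows "lin_eval (ell \<alpha> \<beta>) (fst (base_pt s c)) (snd (base_pt s c)) = s"
    and "lin_eval (ell \<alpha> \<beta>) (fst (base_pt s (- c))) (snd (base_pt s (- c))) = s"
  using lin_eval_line_meet(1)[OF line_det_ell_asymptote(1)]
    lin_eval_line_meet(1)[OF line_det_ell_asymptote(2)]
  unfolding base_pt_def ell_def ell_line_def by simp_all

lemma lin_eval_ell_bracket_pt: "lin_eval (ell \<alpha> \<beta>) (fst bracket_pt) (snd bracket_pt) = 0"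
  using lin_eval_line_meet(1)[OF line_det_ell_bracket[of 0]]
  unfolding bracket_pt_def ell_def ell_line_def by simp

lemma singular_and_base_points:
  "\<exists>B0 B1 B2 B3 B4 B5.
     lin_eval (ell \<alpha> \<beta>) (fst B1) (snd B1) = - c \<and> lin_eval (ell \<alpha> \<beta>) (fst B3) (snd B3) = c \<and>
     lin_eval (ell \<alpha> \<beta>) (fst B0) (snd B0) = 0 \<and>
     lin_eval (ell \<alpha> \<beta>) (fst B2) (snd B2) = - c \<and> lin_eval (ell \<alpha> \<beta>) (fst B4) (snd B4) = c \<and>
     lin_eval (ell \<alpha> \<beta>) (fst B5) (snd B5) = 0 \<and>
     kahan_sing (fvf \<alpha> \<beta> a1 a2 a3 a4 a5) = proj_pt B1 \<union> proj_pt B3 \<union> proj_pt B0 \<and>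
     kahan_inv_sing (fvf \<alpha> \<beta> a1 a2 a3 a4 a5) = proj_pt B2 \<union> proj_pt B4 \<union> proj_pt B5 \<and>
     pencil_base (Cconic \<alpha> \<beta> a1 a2 a3 a4 a5) (Dconic \<alpha> \<beta> a1 a2 a3)
       = proj_pt B1 \<union> proj_pt B2 \<union> proj_pt B3 \<union> proj_pt B4 \<and>
     B0 = midpt B2 B4 \<and> B5 = midpt B1 B3"
proof -
  interpret inv: kahan_pencil "- \<alpha>" "- \<beta>" a1 a2 a3 a4 a5 c
    using c_sq a3_nz ell_bracket_transversal ell_asymptote_transversal
    by unfold_locales (simp_all add: power2_eq_square algebra_simps)
  have inv_base_pt: "inv.base_pt s s' = base_pt (- s) s'" for s s'
    unfolding inv.base_pt_def base_pt_def inv.ell_line_def ell_line_def inv.asymptote_def asymptote_def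
    by (simp only: line_meet_uminus_left minus_minus)
  have inv_sing: "kahan_inv_sing (fvf \<alpha> \<beta> a1 a2 a3 a4 a5)
      = proj_pt (base_pt (- c) c) \<union> proj_pt (base_pt c (- c)) \<union> proj_pt inv.bracket_pt"
    unfolding kahan_inv_sing_def qvf_neg_fvf inv.kahan_sing_fvf inv_base_pt minus_minus by blast
  have inv_ell: "lin_eval (ell \<alpha> \<beta>) (fst inv.bracket_pt) (snd inv.bracket_pt) = 0"
    using inv.lin_eval_ell_bracket_pt unfolding ell_def by simp algebra
  have "inv.bracket_pt = midpt (base_pt c c) (base_pt (- c) (- c))"
    using inv.bracket_pt_midpt unfolding inv_base_pt by simp
  then have inv_midpt: "inv.bracket_pt = midpt (base_pt (- c) (- c)) (base_pt c c)"
    by (simp only: midpt_commute[of "base_pt c c"])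
  show ?thesis
    by (intro exI[of _ bracket_pt] exI[of _ "base_pt (- c) (- c)"] exI[of _ "base_pt (- c) c"]
        exI[of _ "base_pt c c"] exI[of _ "base_pt c (- c)"] exI[of _ inv.bracket_pt] conjI)
      (rule lin_eval_ell_base_pt lin_eval_ell_bracket_pt inv_ell kahan_sing_fvf inv_sing
        pencil_base_CD bracket_pt_midpt inv_midpt)+
qed

end

lemma polyfun_diff: "polyfun n p \<Longrightarrow> polyfun n q \<Longrightarrow> polyfun n (\<lambda>v. p v - q v)"
  using pf_add[of n p "\<lambda>v. - 1 * q v"] pf_mult[OF pf_const, of n q "- 1"] by simp

lemma polyfun_power: "polyfun n p \<Longrightarrow> polyfun n (\<lambda>v. p v ^ k)"
proof (induction k)
  case 0
  show ?case using pf_const[of n 1] by simp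
next
  case (Suc k)
  then show ?case using pf_mult[of n p "\<lambda>v. p v ^ k"] by simp
qed

theorem theorem3:
  shows "holds_generically 7 (\<lambda>v.
    let \<alpha> = v 0; \<beta> = v 1; a1 = v 2; a2 = v 3; a3 = v 4; a4 = v 5; a5 = v 6;
        f = fvf \<alpha> \<beta> a1 a2 a3 a4 a5;
        L = (\<lambda>p. lin_eval (ell \<alpha> \<beta>) (fst p) (snd p))
    in (\<alpha>, \<beta>) \<noteq> (0, 0) \<longrightarrow>
       conic_nonsingular (Cconic \<alpha> \<beta> a1 a2 a3 a4 a5) \<longrightarrow>
       (\<forall>c. c^2 * gamma1 a1 a2 a3 = 1 \<longrightarrow>
         (\<exists>B0 B1 B2 B3 B4 B5.
            L B1 = - c \<and> L B3 = c \<and> L B0 = 0 \<and>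
            L B2 = - c \<and> L B4 = c \<and> L B5 = 0 \<and>
            kahan_sing f = proj_pt B1 \<union> proj_pt B3 \<union> proj_pt B0 \<and>
            kahan_inv_sing f = proj_pt B2 \<union> proj_pt B4 \<union> proj_pt B5 \<and>
            pencil_base (Cconic \<alpha> \<beta> a1 a2 a3 a4 a5) (Dconic \<alpha> \<beta> a1 a2 a3)
              = proj_pt B1 \<union> proj_pt B2 \<union> proj_pt B3 \<union> proj_pt B4 \<and>
            B0 = midpt B2 B4 \<and> B5 = midpt B1 B3)))"
proof -
  \<comment> \<open>\<open>G v \<noteq> 0\<close> already forces \<open>(\<alpha>, \<beta>) \<noteq> 0\<close>.\<close>
  define G where "G = (\<lambda>v :: nat \<Rightarrow> complex. v 4 * (v 0^2 * v 4 - 2 * v 0 * v 1 * v 3 + v 1^2 * v 2)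
    * ((v 0 * v 4 - v 1 * v 3)^2 - v 1^2 * (v 3^2 - v 2 * v 4)))"
  have "polyfun 7 G"
    unfolding G_def by (intro pf_mult polyfun_diff pf_add polyfun_power pf_const pf_var) simp_all
  moreover have "G (\<lambda>i. if i = 0 \<or> i = 4 then 1 else 0) \<noteq> 0"
    unfolding G_def by simp
  moreover have "kahan_pencil (v 0) (v 1) (v 2) (v 3) (v 4) c"
    if "G v \<noteq> 0" and "c^2 * gamma1 (v 2) (v 3) (v 4) = 1" for v c
    using that unfolding G_def by unfold_locales (auto simp: gamma1_def)
  ultimately show ?thesis
    unfolding holds_generically_def Let_def using kahan_pencil.singular_and_base_points by blast
qed

end
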